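(* Let $f\in\mathbb{Z}_2[x]$, $n\ge2$, and let $\sigma$ be a weakly splitting cycle of $f_n$. Then one of the two lifts of $\sigma$ is again weakly splitting, and the other lift weakly grows and its (unique) lift strongly splits.
   Context: $f_n$ is the induced map on $\mathbb{Z}/2^n\mathbb{Z}$, $f_n(x\bmod 2^n)=f(x)\bmod 2^n$. A $k$-cycle of $f_n$ is a tuple $\sigma=(x_1,\dots,x_k)$ of distinct elements with $f_n(x_i)=x_{i+1}$, $f_n(x_k)=x_1$; its lifts are the cycles of $f_{n+1}$ in $\{y\in\mathbb{Z}/2^{n+1}\mathbb{Z}:y\bmod 2^n\in\sigma\}$. For a $k$-cycle at level $n$ and a representative $x\in\mathbb{Z}_2$ of one of its points, $a_n=(f^k)'(x)$, $b_n=(f^k(x)-x)/2^n$. A cycle strongly grows if $a_n\equiv1\pmod4$, $b_n$ odd; weakly grows if $a_n\equiv3\pmod4$, $b_n$ odd; strongly splits if $a_n\equiv1\pmod4$, $b_n$ even; weakly splits if $a_n\equiv3\pmod4$, $b_n$ even (independent of the representative). *)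

theory Defs
  imports "HOL-Computational_Algebra.Polynomial"
begin

text \<open>A 2-adic integer is represented by its compatible sequence of residues:
  the m-th entry is its reduction modulo 2^m, taken in {0..<2^m}.\<close>

typedef padic2 = "{x :: nat \<Rightarrow> int. \<forall>m. x m \<in> {0..<2^m} \<and> x (Suc m) mod 2^m = x m}"
  morphisms digits Abs_padic2
  by (rule exI[of _ "\<lambda>_. 0"]) auto
setup_lifting type_definition_padic2
lemma mod_Suc_pow2: "(a::int) mod 2^Suc m mod 2^m = a mod 2^m"
  by (rule mod_mod_cancel) simp
lemma digits_range: "digits x m \<in> {0..<2^m}"
  using digits[of x] by auto
lemma digits_mod [simp]: "digits x m mod 2^m = digits x m"
  using digits_range[of x m] by auto
lemma digits_0 [simp]: "digits x 0 = 0"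
  using digits_range[of x 0] by simp
lemma digits_Suc: "digits x (Suc m) mod 2^m = digits x m"
  using digits[of x] by auto

instantiation padic2 :: comm_ring_1
begin
lift_definition zero_padic2 :: padic2 is "\<lambda>m. 0" by simp
lift_definition one_padic2 :: padic2 is "\<lambda>m. 1 mod 2^m"
  apply (intro allI conjI)
  apply simp
  by (simp only: mod_Suc_pow2)
lift_definition plus_padic2 :: "padic2 \<Rightarrow> padic2 \<Rightarrow> padic2"
  is "\<lambda>x y m. (x m + y m) mod 2^m"
  apply (intro allI conjI)
  apply simp
  apply (simp only: mod_Suc_pow2)
  by (metis mod_add_eq)
lift_definition uminus_padic2 :: "padic2 \<Rightarrow> padic2"
  is "\<lambda>x m. (- x m) mod 2^m"
  apply (intro allI conjI)
  apply simp
  apply (simp only: mod_Suc_pow2)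
  by (metis mod_minus_eq)
lift_definition minus_padic2 :: "padic2 \<Rightarrow> padic2 \<Rightarrow> padic2"
  is "\<lambda>x y m. (x m - y m) mod 2^m"
  apply (intro allI conjI)
  apply simp
  apply (simp only: mod_Suc_pow2)
  by (metis mod_diff_eq)
lift_definition times_padic2 :: "padic2 \<Rightarrow> padic2 \<Rightarrow> padic2"
  is "\<lambda>x y m. (x m * y m) mod 2^m"
  apply (intro allI conjI)
  apply simp
  apply (simp only: mod_Suc_pow2)
  by (metis mod_mult_eq)

instance
proof
  fix a b c :: padic2
  show "a * b * c = a * (b * c)"
    by (rule digits_inject[THEN iffD1])
       (simp add: times_padic2.rep_eq mod_mult_left_eq mod_mult_right_eq mult.assoc fun_eq_iff)
  show "a * b = b * a"
    by (rule digits_inject[THEN iffD1]) (simp add: times_padic2.rep_eq mult.commute)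
  show "1 * a = a"
    by (rule digits_inject[THEN iffD1])
       (simp add: times_padic2.rep_eq one_padic2.rep_eq mod_mult_left_eq fun_eq_iff)
  show "a + b + c = a + (b + c)"
    by (rule digits_inject[THEN iffD1])
       (simp add: plus_padic2.rep_eq mod_add_left_eq mod_add_right_eq add.assoc fun_eq_iff)
  show "a + b = b + a"
    by (rule digits_inject[THEN iffD1]) (simp add: plus_padic2.rep_eq add.commute)
  show "0 + a = a"
    by (rule digits_inject[THEN iffD1]) (simp add: plus_padic2.rep_eq zero_padic2.rep_eq fun_eq_iff)
  show "- a + a = 0"
    by (rule digits_inject[THEN iffD1])
       (simp add: plus_padic2.rep_eq uminus_padic2.rep_eq zero_padic2.rep_eq mod_add_left_eq fun_eq_iff)
  show "a - b = a + - b"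
    by (rule digits_inject[THEN iffD1])
       (simp add: plus_padic2.rep_eq uminus_padic2.rep_eq minus_padic2.rep_eq mod_add_right_eq fun_eq_iff)
  show "(a + b) * c = a * c + b * c"
    by (rule digits_inject[THEN iffD1])
       (simp add: plus_padic2.rep_eq times_padic2.rep_eq mod_mult_left_eq mod_add_eq distrib_right fun_eq_iff)
  show "(0::padic2) \<noteq> 1"
  proof
    assume "(0::padic2) = 1"
    hence "digits (0::padic2) 1 = digits (1::padic2) 1" by simp
    thus False by (simp add: zero_padic2.rep_eq one_padic2.rep_eq)
  qed
qed
end

definition red :: "nat \<Rightarrow> padic2 \<Rightarrow> int" where
  "red n x = digits x n"

text \<open>Z_2 is an integral domain (needed for the library's formal derivative pderiv).\<close>

lemma digits_mono_mod:
  assumes "k \<le> m" shows "digits x m mod 2^k = digits x k"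
  using assms
proof (induction m)
  case 0 thus ?case by simp
next
  case (Suc m)
  show ?case
  proof (cases "k = Suc m")
    case True thus ?thesis by (simp only: True digits_mod)
  next
    case False
    hence km: "k \<le> m" using Suc by simp
    have "digits x (Suc m) mod 2^k = digits x (Suc m) mod 2^m mod 2^k"
      using km by (simp add: mod_mod_cancel le_imp_power_dvd)
    also have "\<dots> = digits x m mod 2^k" by (simp only: digits_Suc)
    finally show ?thesis using Suc.IH km by simp
  qed
qed

lemma padic2_nonzero_val:
  assumes "x \<noteq> 0"
  obtains i where "\<And>m. m > i \<Longrightarrow> digits x m mod 2^Suc i = 2^i"
proof -
  have "\<exists>m. digits x m \<noteq> 0"
  proof (rule ccontr)
    assume "\<not> ?thesis"
    hence "digits x = digits 0" by (auto simp: zero_padic2.rep_eq)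
    thus False using assms digits_inject by blast
  qed
  then obtain m where m: "digits x m \<noteq> 0" by blast
  define j where "j = (LEAST j. digits x j \<noteq> 0)"
  have j: "digits x j \<noteq> 0" unfolding j_def by (rule LeastI, rule m)
  have j0: "j \<noteq> 0" using j by (metis digits_0)
  then obtain i where ij: "j = Suc i" by (cases j) auto
  have xi: "digits x i = 0"
  proof (rule ccontr)
    assume "digits x i \<noteq> 0"
    hence "j \<le> i" unfolding j_def by (rule Least_le)
    thus False using ij by simp
  qed
  have rng: "digits x (Suc i) \<in> {0..<2^Suc i}" by (rule digits_range)
  have "digits x (Suc i) mod 2^i = 0" using digits_Suc[of x i] xi by simp
  then obtain q where q: "digits x (Suc i) = 2^i * q"
    by (metis dvd_def mod_0_imp_dvd)
  have "q \<noteq> 0" using q j ij by auto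
  moreover have "0 \<le> 2^i * q" using q rng by simp
  hence "q \<ge> 0" by (simp add: zero_le_mult_iff)
  moreover have "2^i * q < 2^i * 2" using q rng by simp
  hence "q < 2" by simp
  ultimately have "q = 1" by simp
  hence xsi: "digits x (Suc i) = 2^i" using q by simp
  show ?thesis
  proof (rule that)
    fix m assume "m > i"
    hence "Suc i \<le> m" by simp
    thus "digits x m mod 2^Suc i = 2^i" using digits_mono_mod[of "Suc i" m x] xsi by (simp only:)
  qed
qed

lemma pow2_decomp:
  assumes "(a::int) mod 2^Suc i = 2^i" obtains s where "a = 2^i + 2^Suc i * s"
proof -
  have e: "a = 2^i + 2^Suc i * (a div 2^Suc i)"
    by (metis assms add.commute div_mult_mod_eq mult.commute)
  show ?thesis by (rule that[OF e])
qed

instance padic2 :: idom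
proof
  fix a b :: padic2
  assume a: "a \<noteq> 0" and b: "b \<noteq> 0"
  obtain i where ai: "\<And>m. m > i \<Longrightarrow> digits a m mod 2^Suc i = 2^i"
    using padic2_nonzero_val[OF a] by blast
  obtain j where bj: "\<And>m. m > j \<Longrightarrow> digits b m mod 2^Suc j = 2^j"
    using padic2_nonzero_val[OF b] by blast
  define m where "m = Suc (i + j)"
  obtain s where s: "digits a m = 2^i + 2^Suc i * s"
    using ai[of m] pow2_decomp unfolding m_def by auto
  obtain t where t: "digits b m = 2^j + 2^Suc j * t"
    using bj[of m] pow2_decomp unfolding m_def by auto
  have "digits a m * digits b m = 2^(i+j) + 2^m * (s + t + 2 * s * t)"
    unfolding s t by (simp add: m_def algebra_simps power_add)
  hence "(digits a m * digits b m) mod 2^m = 2^(i+j) mod 2^m"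
    by simp
  also have "\<dots> = 2^(i+j)" unfolding m_def by simp
  finally have "digits (a * b) m \<noteq> 0" by (simp add: times_padic2.rep_eq)
  thus "a * b \<noteq> 0" by (auto simp: zero_padic2.rep_eq)
qed

text \<open>Elements of Z/2^n Z are represented by integers in {0..<2^n}.
  The induced map: f_n(y mod 2^n) = f(y) mod 2^n.\<close>
definition fmap :: "nat \<Rightarrow> padic2 poly \<Rightarrow> int \<Rightarrow> int" where
  "fmap n f y = red n (poly f (of_int y))"

text \<open>A cycle of f_n, identified with its set of points (a k-cycle tuple up to rotation).\<close>
definition is_cycle :: "nat \<Rightarrow> padic2 poly \<Rightarrow> int set \<Rightarrow> bool" where
  "is_cycle n f C \<longleftrightarrow> (\<exists>xs. xs \<noteq> [] \<and> distinct xs \<and> set xs \<subseteq> {0..<2^n} \<and>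
      (\<forall>i < length xs. fmap n f (xs ! i) = xs ! ((i + 1) mod length xs)) \<and> C = set xs)"

definition lifts :: "nat \<Rightarrow> padic2 poly \<Rightarrow> int set \<Rightarrow> int set set" where
  "lifts n f C = {D. is_cycle (Suc n) f D \<and> D \<subseteq> {y \<in> {0..<2^Suc n}. y mod 2^n \<in> C}}"

definition piter :: "padic2 poly \<Rightarrow> nat \<Rightarrow> padic2 poly" where
  "piter f k = ((\<lambda>p. pcompose f p) ^^ k) [:0, 1:]"

definition rep :: "nat \<Rightarrow> int set \<Rightarrow> padic2" where
  "rep n C = (SOME x. red n x \<in> C)"

definition a_val :: "nat \<Rightarrow> padic2 poly \<Rightarrow> int set \<Rightarrow> padic2" where
  "a_val n f C = poly (pderiv (piter f (card C))) (rep n C)"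

definition b_val :: "nat \<Rightarrow> padic2 poly \<Rightarrow> int set \<Rightarrow> padic2" where
  "b_val n f C = (THE b. poly (piter f (card C)) (rep n C) - rep n C = 2^n * b)"

definition strongly_grows :: "nat \<Rightarrow> padic2 poly \<Rightarrow> int set \<Rightarrow> bool" where
  "strongly_grows n f C \<longleftrightarrow> red 2 (a_val n f C) = 1 \<and> red 1 (b_val n f C) = 1"

definition weakly_grows :: "nat \<Rightarrow> padic2 poly \<Rightarrow> int set \<Rightarrow> bool" where
  "weakly_grows n f C \<longleftrightarrow> red 2 (a_val n f C) = 3 \<and> red 1 (b_val n f C) = 1"

definition strongly_splits :: "nat \<Rightarrow> padic2 poly \<Rightarrow> int set \<Rightarrow> bool" where
  "strongly_splits n f C \<longleftrightarrow> red 2 (a_val n f C) = 1 \<and> red 1 (b_val n f C) = 0"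

definition weakly_splits :: "nat \<Rightarrow> padic2 poly \<Rightarrow> int set \<Rightarrow> bool" where
  "weakly_splits n f C \<longleftrightarrow> red 2 (a_val n f C) = 3 \<and> red 1 (b_val n f C) = 0"

end

theory Submission
  imports Defs
begin

text \<open>
  For a point \<open>x\<close> of a \<open>k\<close>-cycle modulo \<open>2^n\<close> write \<open>A = (f^k)'(x)\<close> for the multiplier and
  \<open>f^k(x) - x = 2^n B\<close> for the displacement.
  When \<open>A\<close> is odd, \<open>A mod 2^n\<close> and \<open>B mod 2\<close> do not depend on the point chosen, and by Taylor
  expansion \<open>f^k(x + 2^n h) - (x + 2^n h) = 2^n (B + h (A - 1)) + 2^(2n) (\<dots>)\<close>.
  If \<open>B = 2B'\<close> is even, \<open>x\<close> and \<open>x + 2^n\<close> are both \<open>k\<close>-periodic modulo \<open>2^(n+1)\<close> and give the two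
  lifts; their displacements \<open>B'\<close> and \<open>B' + (A - 1)/2 + 2^(n-1)(\<dots>)\<close> have opposite parity when
  \<open>A \<equiv> 3 (mod 4)\<close>, while the multiplier stays \<open>\<equiv> 3 (mod 4)\<close>.
  If \<open>B\<close> is odd, \<open>f^k\<close> swaps \<open>x\<close> and \<open>x + 2^n\<close> modulo \<open>2^(n+1)\<close>, so the only lift is the \<open>2k\<close>-cycle
  through \<open>x\<close>; its multiplier is \<open>\<equiv> A^2 \<equiv> 1 (mod 4)\<close> and its displacement
  \<open>(B (A + 1) + 2^n B^2 (\<dots>))/2\<close> is even.
\<close>

section \<open>Reduction modulo powers of 2\<close>

lemma red_add: "red m (x + y) = (red m x + red m y) mod 2^m"
  by (simp add: red_def plus_padic2.rep_eq)

lemma red_diff: "red m (x - y) = (red m x - red m y) mod 2^m"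
  by (simp add: red_def minus_padic2.rep_eq)

lemma red_mult: "red m (x * y) = (red m x * red m y) mod 2^m"
  by (simp add: red_def times_padic2.rep_eq)

lemma red_range: "red m x \<in> {0..<2^m}"
  unfolding red_def by (rule digits_range)

lemma red_mod [simp]: "red m x mod 2^m = red m x"
  by (simp add: red_def)

lemma red_mono: "k \<le> m \<Longrightarrow> red m x mod 2^k = red k x"
  by (simp add: red_def digits_mono_mod)

lemma red_of_nat: "red m (of_nat j) = int j mod 2^m"
proof (induction j)
  case 0
  then show ?case by (simp add: red_def zero_padic2.rep_eq)
next
  case (Suc j)
  have "red m (of_nat (Suc j)) = red m (1 + of_nat j)"
    by simp
  also have "\<dots> = (1 mod 2^m + int j mod 2^m) mod 2^m"
    by (simp only: red_add Suc) (simp add: red_def one_padic2.rep_eq)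
  also have "\<dots> = int (Suc j) mod 2^m"
    by (metis mod_add_eq of_nat_Suc add.commute)
  finally show ?case .
qed

lemma red_of_int: "red m (of_int z) = z mod 2^m"
proof -
  have "(of_int z :: padic2) = of_nat (nat z) - of_nat (nat (- z))"
    by (cases "z \<ge> 0") simp_all
  then have "red m (of_int z) = (int (nat z) mod 2^m - int (nat (- z)) mod 2^m) mod 2^m"
    by (simp add: red_diff red_of_nat)
  also have "\<dots> = z mod 2^m"
    by (simp add: mod_diff_eq)
  finally show ?thesis .
qed

lemma red_of_int_eq: "z \<in> {0..<2^m} \<Longrightarrow> red m (of_int z) = z"
  by (simp add: red_of_int)

lemma red_eq_if_pow2_dvd:
  assumes "(2::padic2)^m dvd x - y"
  shows "red m x = red m y"
proof -
  obtain c where "x - y = 2^m * c"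
    using assms by (auto simp: dvd_def)
  then have "red m (x - y) = 0"
    using red_mult[of m "2^m" c] red_of_int[of m "2^m"] by simp
  then have "2^m dvd red m x - red m y"
    by (simp add: red_diff mod_eq_0_iff_dvd)
  then show ?thesis
    by (metis mod_eq_dvd_iff red_mod)
qed

text \<open>The quotient \<open>z / 2^m\<close> is read off the digits of \<open>z\<close> at levels \<open>j + m\<close>.\<close>

lemma pow2_dvd_if_red_eq_0:
  assumes "red m z = 0"
  shows "(2::padic2)^m dvd z"
proof -
  define c where "c j = digits z (j + m) div 2^m" for j
  have z_eq: "digits z (j + m) = 2^m * c j" for j
  proof -
    have "digits z (j + m) mod 2^m = 0"
      using digits_mono_mod[of m "j + m" z] assms by (simp add: red_def)
    then show ?thesis
      unfolding c_def by (metis mult_div_mod_eq add_0_right)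
  qed
  have c_range: "c j \<in> {0..<2^j}" for j
    using digits_range[of z "j + m"] z_eq[of j] by (auto simp: power_add zero_le_mult_iff)
  have c_compat: "c (Suc j) mod 2^j = c j" for j
  proof -
    have "(2^m * c (Suc j)) mod (2^m * 2^j) = 2^m * c j"
      using digits_Suc[of z "j + m"] z_eq[of "Suc j"] z_eq[of j] by (simp add: power_add mult.commute)
    then show ?thesis
      by (simp add: mod_mult_mult1)
  qed
  define C where "C = Abs_padic2 c"
  have digits_C: "digits C = c"
    unfolding C_def using c_range c_compat by (simp add: Abs_padic2_inverse)
  have "digits (2^m * C) j = digits z j" for j
  proof -
    have "digits (2^m * C) j = (2^m * c j) mod 2^j"
      using red_mult[of j "2^m" C] red_of_int[of j "2^m"] digits_C
      by (simp add: red_def mod_mult_left_eq)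
    also have "\<dots> = digits z j"
      by (simp add: z_eq[symmetric] digits_mono_mod)
    finally show ?thesis .
  qed
  then have "z = 2^m * C"
    by (simp add: digits_inject[symmetric] fun_eq_iff)
  then show ?thesis
    by simp
qed

lemma red_eq_iff: "red m x = red m y \<longleftrightarrow> (2::padic2)^m dvd x - y"
proof
  assume "red m x = red m y"
  then have "red m (x - y) = 0"
    by (simp add: red_diff)
  then show "(2::padic2)^m dvd x - y"
    by (rule pow2_dvd_if_red_eq_0)
qed (rule red_eq_if_pow2_dvd)

lemma red_eq_mono: "k \<le> m \<Longrightarrow> red m x = red m y \<Longrightarrow> red k x = red k y"
  by (metis red_mono)

lemma red_Suc_imp_red: "red (Suc m) x = red (Suc m) y \<Longrightarrow> red m x = red m y"
  by (rule red_eq_mono[of m "Suc m"]) simp_all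

lemma two_dvd_iff_red1: "(2::padic2) dvd x \<longleftrightarrow> red 1 x = 0"
  using red_eq_iff[of 1 x 0] red_of_int_eq[of 0 1] by simp

lemma not_two_dvd_iff_red1: "\<not> (2::padic2) dvd x \<longleftrightarrow> red 1 x = 1"
  using two_dvd_iff_red1[of x] red_range[of 1 x] by auto

lemma not_two_dvd_if_odd_red2: "odd (red 2 x) \<Longrightarrow> \<not> (2::padic2) dvd x"
  using red_mono[of 1 2 x] by (simp add: not_two_dvd_iff_red1 odd_iff_mod_2_eq_one)

lemma two_neq_zero [simp]: "(2::padic2) \<noteq> 0"
proof
  assume "(2::padic2) = 0"
  then have "red 2 (2::padic2) = red 2 0"
    by simp
  then show False
    using red_of_int[of 2 2] red_of_int[of 2 0] by simp
qed

lemma two_dvd_mult: "(2::padic2) dvd x * y \<Longrightarrow> 2 dvd x \<or> 2 dvd y"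
  using red_mult[of 1 x y] not_two_dvd_iff_red1[of x] not_two_dvd_iff_red1[of y]
  by (auto simp: two_dvd_iff_red1)

lemma pow2_dvd_mult_odd:
  assumes "\<not> (2::padic2) dvd g"
  shows "(2::padic2)^m dvd g * d \<Longrightarrow> 2^m dvd d"
proof (induction m arbitrary: d)
  case (Suc m)
  then have "2 dvd g * d"
    by (metis dvd_mult_left power_Suc)
  then obtain d' where d': "d = 2 * d'"
    using two_dvd_mult assms by blast
  then have "2 * 2^m dvd 2 * (g * d')"
    using Suc.prems by (simp add: ac_simps)
  then have "2^m dvd g * d'"
    by simp
  then have "2^m dvd d'"
    by (rule Suc.IH)
  then show ?case
    using d' by simp
qed simp

lemma red_mult_cancel_odd:
  assumes "\<not> (2::padic2) dvd g" and "red m (x * g) = red m (y * g)"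
  shows "red m x = red m y"
  using assms pow2_dvd_mult_odd[OF assms(1), of m "x - y"]
  by (simp add: red_eq_iff algebra_simps)

lemma not_two_dvd_iff: "\<not> (2::padic2) dvd x \<longleftrightarrow> 2 dvd x - 1"
  using red_diff[of 1 x 1] red_of_int_eq[of 1 1] red_range[of 1 x]
  by (auto simp: two_dvd_iff_red1)

lemma red_Suc_eq_iff_two_dvd:
  assumes "x - y = (2::padic2)^m * b"
  shows "red (Suc m) x = red (Suc m) y \<longleftrightarrow> 2 dvd b"
  using assms by (simp add: red_eq_iff mult.commute[of "2^m"])

lemma red_Suc_cases:
  assumes "red m z = red m x"
  shows "red (Suc m) z = red (Suc m) x \<or> red (Suc m) z = red (Suc m) (x + 2^m)"
proof -
  obtain d where d: "z - x = 2^m * d"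
    using assms by (auto simp: red_eq_iff dvd_def)
  moreover have "z - (x + 2^m) = 2^m * (d - 1)"
    using d by (simp add: algebra_simps)
  ultimately show ?thesis
    using red_Suc_eq_iff_two_dvd not_two_dvd_iff by blast
qed

section \<open>Iterates and Taylor expansion\<close>

lemma poly_taylor2:
  fixes x h :: "'a::idom"
  shows "\<exists>c. poly p (x + h) = poly p x + h * poly (pderiv p) x + h^2 * c"
proof (induction p)
  case (pCons a p)
  then obtain c where c: "poly p (x + h) = poly p x + h * poly (pderiv p) x + h^2 * c"
    by blast
  have "poly (pCons a p) (x + h) = a + (x + h) * poly p (x + h)"
    by simp
  also have "\<dots> = poly (pCons a p) x + h * poly (pderiv (pCons a p)) x
      + h^2 * (poly (pderiv p) x + (x + h) * c)"
    unfolding c by (simp add: pderiv_pCons algebra_simps power2_eq_square)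
  finally show ?case
    by blast
qed simp

lemma poly_displacement_shift:
  fixes x q b h :: "'a::idom"
  assumes "poly p x - x = q * b"
  obtains c where "poly p (x + q * h) - (x + q * h) = q * (b + h * (poly (pderiv p) x - 1) + q * h^2 * c)"
proof -
  obtain c where "poly p (x + q * h) = poly p x + q * h * poly (pderiv p) x + (q * h)^2 * c"
    using poly_taylor2 by blast
  with assms show ?thesis
    by (intro that[of c]) (simp add: algebra_simps power2_eq_square)
qed

lemma dvd_poly_diff: "(x - y) dvd poly p x - poly p (y::'a::idom)"
proof -
  obtain c where "poly p (y + (x - y)) = poly p y + (x - y) * poly (pderiv p) y + (x - y)^2 * c"
    using poly_taylor2 by blast
  then have "poly p x - poly p y = (x - y) * (poly (pderiv p) y + (x - y) * c)"
    by (simp add: algebra_simps power2_eq_square)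
  then show ?thesis
    by simp
qed

lemma red_poly_cong: "red m x = red m y \<Longrightarrow> red m (poly p x) = red m (poly p y)"
  using dvd_poly_diff dvd_trans by (metis red_eq_iff)

abbreviation iterate :: "padic2 poly \<Rightarrow> nat \<Rightarrow> padic2 \<Rightarrow> padic2" where
  "iterate f k \<equiv> poly (piter f k)"

abbreviation iterate_deriv :: "padic2 poly \<Rightarrow> nat \<Rightarrow> padic2 \<Rightarrow> padic2" where
  "iterate_deriv f k \<equiv> poly (pderiv (piter f k))"

lemma iterate_0 [simp]: "iterate f 0 x = x"
  by (simp add: piter_def)

lemma iterate_Suc: "iterate f (Suc j) x = poly f (iterate f j x)"
  by (simp add: piter_def poly_pcompose)

lemma iterate_add: "iterate f (i + j) x = iterate f i (iterate f j x)"
  by (induction i) (simp_all add: iterate_Suc)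

lemma iterate_deriv_0 [simp]: "iterate_deriv f 0 x = 1"
  by (simp add: piter_def pderiv_pCons)

lemma iterate_deriv_Suc: "iterate_deriv f (Suc j) x = poly (pderiv f) (iterate f j x) * iterate_deriv f j x"
  by (simp add: piter_def pderiv_pcompose poly_pcompose)

lemma iterate_deriv_add:
  "iterate_deriv f (i + j) x = iterate_deriv f i (iterate f j x) * iterate_deriv f j x"
  by (induction i) (simp_all add: iterate_deriv_Suc iterate_add)

lemma fmap_red: "fmap m f (red m x) = red m (poly f x)"
  unfolding fmap_def by (rule red_poly_cong) (simp add: red_of_int)

lemma funpow_fmap_red: "(fmap m f ^^ j) (red m x) = red m (iterate f j x)"
  by (induction j) (simp_all add: fmap_red iterate_Suc)

section \<open>Periodic points and their orbits\<close>

definition orbit :: "nat \<Rightarrow> padic2 poly \<Rightarrow> nat \<Rightarrow> padic2 \<Rightarrow> int set" where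
  "orbit m f k x = (\<lambda>i. red m (iterate f i x)) ` {..<k}"

definition exact_period :: "nat \<Rightarrow> padic2 poly \<Rightarrow> nat \<Rightarrow> padic2 \<Rightarrow> bool" where
  "exact_period m f k x \<longleftrightarrow> 0 < k \<and> red m (iterate f k x) = red m x \<and>
     (\<forall>i. 0 < i \<and> i < k \<longrightarrow> red m (iterate f i x) \<noteq> red m x)"

lemma red_iterate_mod_period:
  assumes "red m (iterate f k x) = red m x"
  shows "red m (iterate f i x) = red m (iterate f (i mod k) x)"
proof -
  have "red m (iterate f (q * k + r) x) = red m (iterate f r x)" for q r
  proof (induction q)
    case (Suc q)
    have "iterate f (Suc q * k + r) x = iterate f (q * k + r) (iterate f k x)"
      by (simp add: iterate_add[symmetric] algebra_simps)
    with Suc show ?case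
      using red_poly_cong[OF assms] by simp
  qed simp
  then show ?thesis
    by (metis div_mult_mod_eq)
qed

lemma exact_period_dvd:
  assumes "exact_period m f k x" and "red m (iterate f i x) = red m x"
  shows "k dvd i"
  using assms red_iterate_mod_period[of m f k x i] mod_less_divisor[of k i]
  unfolding exact_period_def by (metis dvd_eq_mod_eq_0 bot_nat_0.not_eq_extremum)

lemma exact_period_unique: "exact_period m f k x \<Longrightarrow> exact_period m f l x \<Longrightarrow> k = l"
  by (meson dvd_antisym exact_period_def exact_period_dvd)

lemma exact_period_red_cong:
  assumes "exact_period m f k x" and "red m y = red m x"
  shows "exact_period m f k y"
  using assms red_poly_cong[OF assms(2)] unfolding exact_period_def by metis

lemma exact_period_Suc:
  assumes "exact_period m f k x" and "red (Suc m) (iterate f k x) = red (Suc m) x"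
  shows "exact_period (Suc m) f k x"
  using assms red_Suc_imp_red unfolding exact_period_def by metis

lemma exact_period_Suc_double:
  assumes "exact_period m f k x"
    and "red (Suc m) (iterate f k x) \<noteq> red (Suc m) x"
    and "red (Suc m) (iterate f (2 * k) x) = red (Suc m) x"
  shows "exact_period (Suc m) f (2 * k) x"
  unfolding exact_period_def
proof (intro conjI allI impI)
  fix i
  assume i: "0 < i \<and> i < 2 * k"
  show "red (Suc m) (iterate f i x) \<noteq> red (Suc m) x"
  proof
    assume "red (Suc m) (iterate f i x) = red (Suc m) x"
    then obtain q where "i = k * q"
      using exact_period_dvd[OF assms(1)] red_Suc_imp_red by blast
    with i have "i = k"
      by (cases q) (auto simp: numeral_2_eq_2)
    with assms(2) show False
      using \<open>red (Suc m) (iterate f i x) = red (Suc m) x\<close> by simp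
  qed
qed (use assms in \<open>auto simp: exact_period_def\<close>)

lemma red_mem_orbit: "0 < k \<Longrightarrow> red m x \<in> orbit m f k x"
  unfolding orbit_def by (metis iterate_0 image_eqI lessThan_iff)

lemma orbit_eq_range:
  assumes "0 < k" and "red m (iterate f k x) = red m x"
  shows "orbit m f k x = range (\<lambda>i. red m (iterate f i x))"
proof
  show "range (\<lambda>i. red m (iterate f i x)) \<subseteq> orbit m f k x"
  proof
    fix y
    assume "y \<in> range (\<lambda>i. red m (iterate f i x))"
    then obtain i where "y = red m (iterate f (i mod k) x)"
      using red_iterate_mod_period[OF assms(2)] by auto
    then show "y \<in> orbit m f k x"
      unfolding orbit_def using assms(1) by simp
  qed
qed (auto simp: orbit_def)

lemma is_cycle_orbit:
  assumes "exact_period m f k x"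
  shows "is_cycle m f (orbit m f k x)" and "card (orbit m f k x) = k"
proof -
  define xs where "xs = map (\<lambda>i. red m (iterate f i x)) [0..<k]"
  have k: "0 < k" and per: "red m (iterate f k x) = red m x"
    using assms by (auto simp: exact_period_def)
  have neq: "red m (iterate f i x) \<noteq> red m (iterate f j x)" if "i < j" "j < k" for i j
  proof
    assume "red m (iterate f i x) = red m (iterate f j x)"
    then have "red m (iterate f (k - j) (iterate f i x)) = red m (iterate f (k - j) (iterate f j x))"
      by (rule red_poly_cong)
    then have "red m (iterate f (k - j + i) x) = red m (iterate f k x)"
      using \<open>j < k\<close> by (simp add: iterate_add[symmetric])
    moreover have "0 < k - j + i" "k - j + i < k"
      using that by auto
    ultimately show False
      using assms per unfolding exact_period_def by auto
  qed
  have "distinct xs"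
    unfolding xs_def distinct_map inj_on_def
    by (metis neq atLeastLessThan_iff distinct_upt linorder_neqE_nat set_upt)
  moreover have "fmap m f (xs ! i) = xs ! ((i + 1) mod length xs)" if "i < length xs" for i
    using that per by (cases "Suc i = k") (auto simp: xs_def fmap_red iterate_Suc[symmetric])
  moreover have set_xs: "set xs = orbit m f k x"
    by (auto simp: xs_def orbit_def)
  moreover have "xs \<noteq> []" "set xs \<subseteq> {0..<2^m}"
    using k red_range by (auto simp: xs_def)
  ultimately show "is_cycle m f (orbit m f k x)"
    unfolding is_cycle_def by blast
  show "card (orbit m f k x) = k"
    using distinct_card[OF \<open>distinct xs\<close>] set_xs by (simp add: xs_def)
qed

lemma funpow_list_cycle:
  assumes "\<forall>i < length xs. g (xs ! i) = xs ! ((i + 1) mod length xs)" and "j < length xs"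
  shows "(g ^^ i) (xs ! j) = xs ! ((j + i) mod length xs)"
proof (induction i)
  case (Suc i)
  have "(j + i) mod length xs < length xs"
    using assms(2) by (intro mod_less_divisor) linarith
  then have "(g ^^ Suc i) (xs ! j) = xs ! (((j + i) mod length xs + 1) mod length xs)"
    using Suc assms(1) by simp
  also have "((j + i) mod length xs + 1) mod length xs = (j + Suc i) mod length xs"
    by (simp add: mod_Suc_eq)
  finally show ?case .
qed (use assms in simp)

lemma cycle_eq_orbit:
  assumes "is_cycle m f C" and "red m x \<in> C"
  shows "exact_period m f (card C) x" and "C = orbit m f (card C) x"
proof -
  obtain xs where xs: "xs \<noteq> []" "distinct xs" "\<forall>i < length xs. fmap m f (xs ! i) = xs ! ((i + 1) mod length xs)"
    "C = set xs"
    using assms(1) unfolding is_cycle_def by blast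
  define L where "L = length xs"
  have L: "card C = L" "0 < L"
    using xs by (simp_all add: L_def distinct_card)
  obtain j where j: "j < L" "red m x = xs ! j"
    using assms(2) xs(4) by (metis L_def in_set_conv_nth)
  have iter: "red m (iterate f i x) = xs ! ((j + i) mod L)" for i
    using funpow_list_cycle[OF xs(3), of j i] j by (metis L_def funpow_fmap_red)
  have "(j + i) mod L \<noteq> j" if "0 < i" "i < L" for i
  proof
    assume "(j + i) mod L = j"
    then have "L dvd i"
      using j(1) mod_eq_dvd_iff_nat[of j "j + i" L] by simp
    with that show False
      by (simp add: nat_dvd_not_less)
  qed
  then show period: "exact_period m f (card C) x"
    using L j xs(2) iter by (simp add: exact_period_def nth_eq_iff_index_eq L_def)
  have "orbit m f (card C) x \<subseteq> C"
    using iter L(2) xs(4) by (auto simp: orbit_def L_def)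
  moreover have "card (orbit m f (card C) x) = card C"
    by (rule is_cycle_orbit(2)[OF period])
  ultimately show "C = orbit m f (card C) x"
    using xs(4) by (metis card_subset_eq finite_set)
qed

lemma rep_mem:
  assumes "is_cycle m f C"
  shows "red m (rep m C) \<in> C"
proof -
  obtain y where "y \<in> C" "y \<in> {0..<2^m}"
    using assms unfolding is_cycle_def by (metis last_in_set subsetD)
  then have "red m (of_int y) \<in> C"
    by (simp add: red_of_int_eq)
  then show ?thesis
    unfolding rep_def by (rule someI)
qed

lemma cycle_eq_if_common_point:
  assumes "is_cycle m f C" "is_cycle m f D" "red m x \<in> C" "red m x \<in> D"
  shows "C = D"
  using cycle_eq_orbit[OF assms(1,3)] cycle_eq_orbit[OF assms(2,4)] exact_period_unique by metis

lemma cycle_iterate_mem: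
  assumes "is_cycle m f C" and "red m x \<in> C"
  shows "red m (iterate f j x) \<in> C"
  using cycle_eq_orbit[OF assms] orbit_eq_range[of "card C" m f x]
  unfolding exact_period_def by blast

section \<open>Lifts of a cycle\<close>

lemma mem_lifts_orbit_iff:
  assumes "exact_period m f k x"
  shows "D \<in> lifts m f (orbit m f k x) \<longleftrightarrow>
    is_cycle (Suc m) f D \<and> (\<exists>u. red m u = red m x \<and> red (Suc m) u \<in> D)"
proof
  assume D: "D \<in> lifts m f (orbit m f k x)"
  then have cycle: "is_cycle (Suc m) f D"
    by (simp add: lifts_def)
  define w where "w = rep (Suc m) D"
  have w: "red (Suc m) w \<in> D"
    unfolding w_def by (rule rep_mem[OF cycle])
  then have "red m w \<in> orbit m f k x"
    using D red_mono[of m "Suc m" w] by (auto simp: lifts_def)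
  then obtain i where i: "i < k" "red m w = red m (iterate f i x)"
    by (auto simp: orbit_def)
  have "red m (iterate f (k - i) w) = red m (iterate f (k - i) (iterate f i x))"
    using i(2) by (rule red_poly_cong)
  also have "\<dots> = red m x"
    using i(1) assms by (simp add: iterate_add[symmetric] exact_period_def)
  finally show "is_cycle (Suc m) f D \<and> (\<exists>u. red m u = red m x \<and> red (Suc m) u \<in> D)"
    using cycle cycle_iterate_mem[OF cycle w] by blast
next
  assume "is_cycle (Suc m) f D \<and> (\<exists>u. red m u = red m x \<and> red (Suc m) u \<in> D)"
  then obtain u where cycle: "is_cycle (Suc m) f D" and u: "red m u = red m x" "red (Suc m) u \<in> D"
    by blast
  have "y mod 2^m \<in> orbit m f k x" if y: "y \<in> D" for y
  proof -
    obtain j where "y = red (Suc m) (iterate f j u)"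
      using y cycle_eq_orbit(2)[OF cycle u(2)] by (auto simp: orbit_def)
    then have "y mod 2^m = red m (iterate f (j mod k) x)"
      using red_mono[of m "Suc m"] red_poly_cong[OF u(1)] red_iterate_mod_period assms
      by (simp add: exact_period_def)
    then show ?thesis
      using assms by (simp add: orbit_def exact_period_def)
  qed
  moreover have "D \<subseteq> {0..<2^Suc m}"
    using cycle by (auto simp: is_cycle_def)
  ultimately show "D \<in> lifts m f (orbit m f k x)"
    using cycle by (auto simp: lifts_def)
qed

lemma lifts_orbit_of_splitting:
  assumes period: "exact_period m f k x"
    and fix0: "red (Suc m) (iterate f k x) = red (Suc m) x"
    and fix1: "red (Suc m) (iterate f k (x + 2^m)) = red (Suc m) (x + 2^m)"
  shows "exact_period (Suc m) f k x" and "exact_period (Suc m) f k (x + 2^m)"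
    and "lifts m f (orbit m f k x) = {orbit (Suc m) f k x, orbit (Suc m) f k (x + 2^m)}"
    and "orbit (Suc m) f k x \<noteq> orbit (Suc m) f k (x + 2^m)"
proof -
  have red_x1: "red m (x + 2^m) = red m x"
    by (simp add: red_eq_iff)
  show period0: "exact_period (Suc m) f k x"
    using exact_period_Suc[OF period fix0] .
  show period1: "exact_period (Suc m) f k (x + 2^m)"
    using exact_period_Suc[OF exact_period_red_cong[OF period red_x1] fix1] .
  have k: "0 < k"
    using period by (simp add: exact_period_def)
  note cycle0 = is_cycle_orbit(1)[OF period0] and cycle1 = is_cycle_orbit(1)[OF period1]
  note mem0 = red_mem_orbit[OF k, of "Suc m" x f] and mem1 = red_mem_orbit[OF k, of "Suc m" "x + 2^m" f]
  show "orbit (Suc m) f k x \<noteq> orbit (Suc m) f k (x + 2^m)"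
  proof
    assume "orbit (Suc m) f k x = orbit (Suc m) f k (x + 2^m)"
    then obtain i where i: "i < k" "red (Suc m) (x + 2^m) = red (Suc m) (iterate f i x)"
      using mem1 by (auto simp: orbit_def)
    then have "k dvd i"
      using exact_period_dvd[OF period] red_Suc_imp_red red_x1 by metis
    with i(1) have "i = 0"
      by (metis nat_dvd_not_less gr0I)
    with i(2) have "red (Suc m) (x + 2^m) = red (Suc m) x"
      by simp
    then show False
      using red_Suc_eq_iff_two_dvd[of "x + 2^m" x m 1] by (simp add: two_dvd_iff_red1 red_of_int_eq[of 1 1, simplified])
  qed
  show "lifts m f (orbit m f k x) = {orbit (Suc m) f k x, orbit (Suc m) f k (x + 2^m)}"
  proof (intro set_eqI iffI)
    fix D
    assume "D \<in> lifts m f (orbit m f k x)"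
    then obtain u where D: "is_cycle (Suc m) f D" and u: "red m u = red m x" "red (Suc m) u \<in> D"
      using mem_lifts_orbit_iff[OF period] by blast
    from red_Suc_cases[OF u(1)] show "D \<in> {orbit (Suc m) f k x, orbit (Suc m) f k (x + 2^m)}"
      using cycle_eq_if_common_point[OF D cycle0] cycle_eq_if_common_point[OF D cycle1] u(2) mem0 mem1
      by (metis insertI1 insertI2)
  next
    fix D
    assume "D \<in> {orbit (Suc m) f k x, orbit (Suc m) f k (x + 2^m)}"
    then show "D \<in> lifts m f (orbit m f k x)"
      using mem_lifts_orbit_iff[OF period] cycle0 cycle1 mem0 mem1 red_x1 by blast
  qed
qed

lemma lifts_orbit_of_growing:
  assumes period: "exact_period m f k x"
    and moves: "red (Suc m) (iterate f k x) \<noteq> red (Suc m) x"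
    and fix2: "red (Suc m) (iterate f (2 * k) x) = red (Suc m) x"
  shows "exact_period (Suc m) f (2 * k) x"
    and "lifts m f (orbit m f k x) = {orbit (Suc m) f (2 * k) x}"
proof -
  show period2: "exact_period (Suc m) f (2 * k) x"
    using exact_period_Suc_double[OF period moves fix2] .
  note cycle = is_cycle_orbit(1)[OF period2]
  have k: "0 < 2 * k"
    using period by (simp add: exact_period_def)
  have "red m (iterate f k x) = red m x"
    using period by (simp add: exact_period_def)
  then have "red (Suc m) (iterate f k x) = red (Suc m) (x + 2^m)"
    using red_Suc_cases moves by blast
  then have mem: "red (Suc m) u \<in> orbit (Suc m) f (2 * k) x" if "red m u = red m x" for u
    using red_Suc_cases[OF that] red_mem_orbit[OF k] cycle_iterate_mem[OF cycle] by metis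
  show "lifts m f (orbit m f k x) = {orbit (Suc m) f (2 * k) x}"
  proof (intro set_eqI iffI)
    fix D
    assume "D \<in> lifts m f (orbit m f k x)"
    then obtain u where "is_cycle (Suc m) f D" "red m u = red m x" "red (Suc m) u \<in> D"
      using mem_lifts_orbit_iff[OF period] by blast
    then show "D \<in> {orbit (Suc m) f (2 * k) x}"
      using cycle_eq_if_common_point[OF _ cycle] mem by blast
  next
    fix D
    assume "D \<in> {orbit (Suc m) f (2 * k) x}"
    then show "D \<in> lifts m f (orbit m f k x)"
      using mem_lifts_orbit_iff[OF period] cycle red_mem_orbit[OF k] by blast
  qed
qed

section \<open>Multiplier and displacement of a cycle\<close>

lemma b_val_eq:
  assumes "iterate f (card C) (rep m C) - rep m C = 2^m * b"
  shows "b_val m f C = b"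
  unfolding b_val_def by (rule the_equality) (use assms in auto)

lemma not_two_dvd_iterate_deriv_le:
  assumes "\<not> 2 dvd iterate_deriv f k u" and "i \<le> k"
  shows "\<not> 2 dvd iterate_deriv f i u"
  using assms iterate_deriv_add[of f "k - i" i u] by (metis dvd_mult le_add_diff_inverse2)

text \<open>Comparing the chain rule for \<open>f^(k+i) = f^k \<circ> f^i = f^i \<circ> f^k\<close> at \<open>u\<close>, the odd factor
  \<open>(f^i)'(u)\<close> cancels.\<close>

lemma red_iterate_deriv_along_orbit:
  assumes per: "red m (iterate f k u) = red m u" and odd: "\<not> 2 dvd iterate_deriv f k u"
    and "i \<le> k" and y: "red m y = red m (iterate f i u)"
  shows "red m (iterate_deriv f k y) = red m (iterate_deriv f k u)"
proof -
  define g where "g = iterate_deriv f i u"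
  have g: "\<not> 2 dvd g"
    unfolding g_def by (rule not_two_dvd_iterate_deriv_le[OF odd \<open>i \<le> k\<close>])
  have "iterate_deriv f k (iterate f i u) * g = iterate_deriv f i (iterate f k u) * iterate_deriv f k u"
    using iterate_deriv_add[of f k i u] iterate_deriv_add[of f i k u] by (simp add: g_def add.commute)
  moreover have "red m (iterate_deriv f i (iterate f k u)) = red m g"
    unfolding g_def using per by (rule red_poly_cong)
  ultimately have "red m (iterate_deriv f k (iterate f i u) * g) = red m (iterate_deriv f k u * g)"
    by (simp add: red_mult mult.commute)
  then have "red m (iterate_deriv f k (iterate f i u)) = red m (iterate_deriv f k u)"
    by (rule red_mult_cancel_odd[OF g])
  with red_poly_cong[OF y] show ?thesis
    by simp
qed

lemma displacement_parity_along_orbit: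
  assumes m: "1 \<le> m" and disp: "iterate f k u - u = 2^m * B" and odd: "\<not> 2 dvd iterate_deriv f k u"
    and "i \<le> k" and y: "red m y = red m (iterate f i u)"
    and disp_y: "iterate f k y - y = 2^m * B'"
  shows "red 1 B' = red 1 B"
proof -
  define v where "v = iterate f i u"
  define g where "g = iterate_deriv f i u"
  have "\<not> 2 dvd g"
    unfolding g_def by (rule not_two_dvd_iterate_deriv_le[OF odd \<open>i \<le> k\<close>])
  then have g1: "2 dvd g - 1"
    by (simp add: not_two_dvd_iff)
  have two_pow: "(2::padic2) dvd 2^m"
    using m by (simp add: dvd_power)
  obtain c where c: "iterate f i (u + 2^m * B) = v + 2^m * B * g + (2^m * B)^2 * c"
    using poly_taylor2 unfolding v_def g_def by blast
  define Bv where "Bv = B * g + 2^m * B^2 * c"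
  have "iterate f k v = iterate f i (iterate f k u)"
    unfolding v_def using iterate_add[of f k i u] iterate_add[of f i k u] by (simp add: add.commute)
  then have disp_v: "iterate f k v - v = 2^m * Bv"
    using disp c by (simp add: Bv_def algebra_simps power2_eq_square power_mult_distrib)
  have "Bv - B = B * (g - 1) + 2^m * (B^2 * c)"
    by (simp add: Bv_def algebra_simps)
  then have Bv_B: "2 dvd Bv - B"
    using g1 two_pow by (metis dvd_add dvd_mult dvd_mult2)
  have "red m (iterate f k u) = red m u"
    using disp by (simp add: red_eq_iff)
  then have "red m (iterate_deriv f k v) = red m (iterate_deriv f k u)"
    by (rule red_iterate_deriv_along_orbit[OF _ odd \<open>i \<le> k\<close>]) (simp add: v_def)
  then have "red 1 (iterate_deriv f k v) = red 1 (iterate_deriv f k u)"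
    by (rule red_eq_mono[OF m])
  then have "\<not> 2 dvd iterate_deriv f k v"
    using odd by (simp add: two_dvd_iff_red1)
  then have Av1: "2 dvd iterate_deriv f k v - 1"
    by (simp add: not_two_dvd_iff)
  obtain d where d: "y = v + 2^m * d"
    using y unfolding red_eq_iff dvd_def v_def by (metis add.commute diff_add_cancel)
  obtain c' where "iterate f k (v + 2^m * d) - (v + 2^m * d)
      = 2^m * (Bv + d * (iterate_deriv f k v - 1) + 2^m * d^2 * c')"
    using poly_displacement_shift[OF disp_v] by blast
  then have "B' = Bv + d * (iterate_deriv f k v - 1) + 2^m * (d^2 * c')"
    using disp_y d by (simp add: mult.assoc)
  then have "2 dvd B' - Bv"
    using Av1 two_pow by (simp add: dvd_add dvd_mult dvd_mult2)
  then have "2 dvd B' - B"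
    using Bv_B dvd_add by fastforce
  then show ?thesis
    by (simp add: red_eq_iff)
qed

lemma red_a_val_b_val_orbit:
  assumes m: "1 \<le> m" and period: "exact_period m f k u"
    and disp: "iterate f k u - u = 2^m * B" and odd: "\<not> 2 dvd iterate_deriv f k u"
  shows "red m (a_val m f (orbit m f k u)) = red m (iterate_deriv f k u)"
    and "red 1 (b_val m f (orbit m f k u)) = red 1 B"
proof -
  define C where "C = orbit m f k u"
  define x where "x = rep m C"
  have cycle: "is_cycle m f C" and card: "card C = k"
    using is_cycle_orbit[OF period] by (simp_all add: C_def)
  have x: "red m x \<in> C"
    unfolding x_def by (rule rep_mem[OF cycle])
  then obtain i where i: "i < k" "red m x = red m (iterate f i u)"
    by (auto simp: C_def orbit_def)
  have per: "red m (iterate f k u) = red m u"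
    using period by (simp add: exact_period_def)
  show "red m (a_val m f (orbit m f k u)) = red m (iterate_deriv f k u)"
    unfolding a_val_def C_def[symmetric] x_def[symmetric] card
    using red_iterate_deriv_along_orbit[OF per odd _ i(2)] i(1) by simp
  have "red m (iterate f k x) = red m x"
    using cycle_eq_orbit(1)[OF cycle x] card by (simp add: exact_period_def)
  then obtain B' where B': "iterate f k x - x = 2^m * B'"
    by (auto simp: red_eq_iff dvd_def)
  then have "b_val m f C = B'"
    by (intro b_val_eq) (simp add: card x_def)
  then show "red 1 (b_val m f (orbit m f k u)) = red 1 B"
    using displacement_parity_along_orbit[OF m disp odd _ i(2) B'] i(1) by (simp add: C_def)
qed

section \<open>Weakly splitting and weakly growing cycles\<close>

lemma red2_a_val_red1_b_val_orbit:
  assumes "2 \<le> m" and "exact_period m f k u" and "iterate f k u - u = 2^m * B"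
    and "odd (red 2 (iterate_deriv f k u))"
  shows "red 2 (a_val m f (orbit m f k u)) = red 2 (iterate_deriv f k u)"
    and "red 1 (b_val m f (orbit m f k u)) = red 1 B"
proof -
  have "1 \<le> m"
    using assms(1) by simp
  note types = red_a_val_b_val_orbit[OF this assms(2,3) not_two_dvd_if_odd_red2[OF assms(4)]]
  show "red 2 (a_val m f (orbit m f k u)) = red 2 (iterate_deriv f k u)"
    using red_eq_mono[OF assms(1) types(1)] .
  show "red 1 (b_val m f (orbit m f k u)) = red 1 B"
    using types(2) .
qed

lemma red2_eq_3E:
  assumes "red 2 a = 3"
  obtains w where "a = 3 + 4 * w"
proof -
  have "red 2 a = red 2 (3::padic2)"
    using assms red_of_int_eq[of 3 2] by simp
  then obtain w where "a - 3 = 2^2 * w"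
    by (auto simp: red_eq_iff dvd_def)
  then show ?thesis
    by (intro that[of w]) (simp add: algebra_simps)
qed

lemma red1_add_one: "red 1 (b + 1) \<noteq> red 1 b"
proof -
  have "red 1 b = 0 \<or> red 1 b = 1"
    using red_range[of 1 b] by auto
  moreover have "red 1 (b + 1) = (red 1 b + 1) mod 2"
    using red_add[of 1 b 1] red_of_int_eq[of 1 1] by simp
  ultimately show ?thesis
    by auto
qed

text \<open>Shifting the base point by \<open>2^m\<close> changes the displacement by \<open>(A - 1)/2 \<equiv> 1 (mod 2)\<close>.\<close>

lemma weak_split_displacement_flip:
  assumes m: "2 \<le> m" and disp: "iterate f k x - x = 2^Suc m * B"
    and A: "red 2 (iterate_deriv f k x) = 3"
  obtains B1 where "iterate f k (x + 2^m) - (x + 2^m) = 2^Suc m * B1" and "red 1 B1 \<noteq> red 1 B"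
proof -
  obtain w where w: "iterate_deriv f k x = 3 + 4 * w"
    using red2_eq_3E[OF A] .
  obtain j where j: "m = Suc (Suc j)"
    using m by (metis add_2_eq_Suc le_Suc_ex)
  have "iterate f k x - x = 2^m * (2 * B)"
    using disp by simp
  then obtain c where "iterate f k (x + 2^m * 1) - (x + 2^m * 1)
      = 2^m * (2 * B + 1 * (iterate_deriv f k x - 1) + 2^m * 1^2 * c)"
    by (rule poly_displacement_shift)
  then have "iterate f k (x + 2^m) - (x + 2^m) = 2^Suc m * ((B + 1) + 2 * (w + 2^j * c))"
    by (simp add: w j algebra_simps)
  moreover have "red 1 ((B + 1) + 2 * (w + 2^j * c)) = red 1 (B + 1)"
    by (simp add: red_eq_iff)
  ultimately show ?thesis
    using that red1_add_one by metis
qed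

text \<open>Here \<open>f^(2k)(u) - u = 2^m (B (A + 1) + 2^m B^2 c)\<close>, and \<open>4\<close> divides \<open>A + 1\<close>.\<close>

lemma weak_growth_double_displacement:
  assumes m: "2 \<le> m" and disp: "iterate f k u - u = 2^m * B"
    and A: "red 2 (iterate_deriv f k u) = 3"
  obtains B2 where "iterate f (2 * k) u - u = 2^Suc m * B2" and "red 1 B2 = 0"
proof -
  obtain w where w: "iterate_deriv f k u = 3 + 4 * w"
    using red2_eq_3E[OF A] .
  obtain j where j: "m = Suc (Suc j)"
    using m by (metis add_2_eq_Suc le_Suc_ex)
  obtain c where c: "iterate f k (u + 2^m * B) - (u + 2^m * B)
      = 2^m * (B + B * (iterate_deriv f k u - 1) + 2^m * B^2 * c)"
    using poly_displacement_shift[OF disp] by blast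
  have "iterate f (2 * k) u = iterate f k (iterate f k u)"
    by (simp add: mult_2 iterate_add)
  also have "iterate f k u = u + 2^m * B"
    using disp by (simp add: algebra_simps)
  finally have "iterate f (2 * k) u = iterate f k (u + 2^m * B)" .
  then have "iterate f (2 * k) u - u = 2^Suc m * (2 * (B * (1 + w) + 2^j * B^2 * c))"
    using c by (simp add: w j algebra_simps)
  moreover have "red 1 (2 * (B * (1 + w) + 2^j * B^2 * c)) = 0"
    by (subst two_dvd_iff_red1[symmetric]) simp
  ultimately show ?thesis
    using that by blast
qed

lemma weak_growth_double_multiplier:
  assumes m: "2 \<le> m" and per: "red m (iterate f k u) = red m u"
    and A: "red 2 (iterate_deriv f k u) = 3"
  shows "red 2 (iterate_deriv f (2 * k) u) = 1"
proof -
  have "red m (iterate_deriv f k (iterate f k u)) = red m (iterate_deriv f k u)"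
    using per by (rule red_poly_cong)
  then have "red 2 (iterate_deriv f k (iterate f k u)) = 3"
    using red_eq_mono[OF m] A by metis
  moreover have "iterate_deriv f (2 * k) u = iterate_deriv f k (iterate f k u) * iterate_deriv f k u"
    by (simp add: mult_2 iterate_deriv_add)
  ultimately show ?thesis
    using A by (simp add: red_mult)
qed

lemma weakly_growing_orbit_lifts:
  assumes m: "2 \<le> m" and period: "exact_period m f k u" and disp: "iterate f k u - u = 2^m * B"
    and A: "red 2 (iterate_deriv f k u) = 3" and B: "red 1 B = 1"
  shows "weakly_grows m f (orbit m f k u)"
    and "\<exists>\<rho>. lifts m f (orbit m f k u) = {\<rho>} \<and> strongly_splits (Suc m) f \<rho>"
proof -
  show "weakly_grows m f (orbit m f k u)"
    unfolding weakly_grows_def using red2_a_val_red1_b_val_orbit[OF m period disp] A B by simp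
  obtain B2 where disp2: "iterate f (2 * k) u - u = 2^Suc m * B2" and B2: "red 1 B2 = 0"
    using weak_growth_double_displacement[OF m disp A] .
  have "red (Suc m) (iterate f k u) \<noteq> red (Suc m) u"
    using red_Suc_eq_iff_two_dvd[OF disp] B by (simp add: two_dvd_iff_red1)
  moreover have "red (Suc m) (iterate f (2 * k) u) = red (Suc m) u"
    using disp2 by (simp add: red_eq_iff)
  ultimately have period2: "exact_period (Suc m) f (2 * k) u"
    and lifts: "lifts m f (orbit m f k u) = {orbit (Suc m) f (2 * k) u}"
    using lifts_orbit_of_growing[OF period] by blast+
  have A2: "red 2 (iterate_deriv f (2 * k) u) = 1"
    using weak_growth_double_multiplier[OF m _ A] disp by (simp add: red_eq_iff)
  have "2 \<le> Suc m"
    using m by simp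
  note types2 = red2_a_val_red1_b_val_orbit[OF this period2 disp2]
  have "strongly_splits (Suc m) f (orbit (Suc m) f (2 * k) u)"
    unfolding strongly_splits_def using types2 A2 B2 by simp
  with lifts show "\<exists>\<rho>. lifts m f (orbit m f k u) = {\<rho>} \<and> strongly_splits (Suc m) f \<rho>"
    by blast
qed

lemma weakly_splitting_orbit_lifts:
  assumes n: "2 \<le> n" and period: "exact_period n f k x" and disp: "iterate f k x - x = 2^n * B"
    and A: "red 2 (iterate_deriv f k x) = 3" and B: "red 1 B = 0"
  shows "\<exists>\<tau>1 \<tau>2. \<tau>1 \<noteq> \<tau>2 \<and> lifts n f (orbit n f k x) = {\<tau>1, \<tau>2} \<and>
           weakly_splits (Suc n) f \<tau>1 \<and> weakly_grows (Suc n) f \<tau>2 \<and>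
           (\<exists>\<rho>. lifts (Suc n) f \<tau>2 = {\<rho>} \<and> strongly_splits (Suc (Suc n)) f \<rho>)"
proof -
  define x1 where "x1 = x + 2^n"
  have "2 dvd B"
    using B by (simp add: two_dvd_iff_red1)
  then obtain B0 where "B = 2 * B0"
    by (auto simp: dvd_def)
  with disp have disp0: "iterate f k x - x = 2^Suc n * B0"
    by simp
  obtain B1 where disp1: "iterate f k x1 - x1 = 2^Suc n * B1" and B1: "red 1 B1 \<noteq> red 1 B0"
    using weak_split_displacement_flip[OF n disp0 A] unfolding x1_def .
  have "red (Suc n) (iterate f k x) = red (Suc n) x" "red (Suc n) (iterate f k x1) = red (Suc n) x1"
    using disp0 disp1 by (simp_all add: red_eq_iff)
  note split = lifts_orbit_of_splitting[OF period this[unfolded x1_def], folded x1_def]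
  have "red n (iterate_deriv f k x1) = red n (iterate_deriv f k x)"
    by (rule red_poly_cong) (simp add: x1_def red_eq_iff)
  then have A1: "red 2 (iterate_deriv f k x1) = 3"
    using red_eq_mono[OF n] A by metis
  have Suc_n: "2 \<le> Suc n"
    using n by simp
  have splits: "weakly_splits (Suc n) f (orbit (Suc n) f k u)"
    if "exact_period (Suc n) f k u" "iterate f k u - u = 2^Suc n * Bu"
      "red 2 (iterate_deriv f k u) = 3" "red 1 Bu = 0" for u Bu
    unfolding weakly_splits_def using red2_a_val_red1_b_val_orbit[OF Suc_n that(1,2)] that(3,4) by simp
  have conclusion: "\<exists>\<tau>1 \<tau>2. \<tau>1 \<noteq> \<tau>2 \<and> lifts n f (orbit n f k x) = {\<tau>1, \<tau>2} \<and>
           weakly_splits (Suc n) f \<tau>1 \<and> weakly_grows (Suc n) f \<tau>2 \<and>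
           (\<exists>\<rho>. lifts (Suc n) f \<tau>2 = {\<rho>} \<and> strongly_splits (Suc (Suc n)) f \<rho>)"
    if lifts: "lifts n f (orbit n f k x) = {orbit (Suc n) f k ue, orbit (Suc n) f k uo}"
      and neq: "orbit (Suc n) f k ue \<noteq> orbit (Suc n) f k uo"
      and ue: "exact_period (Suc n) f k ue" "iterate f k ue - ue = 2^Suc n * Be"
        "red 2 (iterate_deriv f k ue) = 3" "red 1 Be = 0"
      and uo: "exact_period (Suc n) f k uo" "iterate f k uo - uo = 2^Suc n * Bo"
        "red 2 (iterate_deriv f k uo) = 3" "red 1 Bo = 1"
    for ue uo Be Bo
    using lifts neq splits[OF ue] weakly_growing_orbit_lifts[OF Suc_n uo] by blast
  consider "red 1 B0 = 0" "red 1 B1 = 1" | "red 1 B0 = 1" "red 1 B1 = 0"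
    using B1 red_range[of 1 B0] red_range[of 1 B1] by fastforce
  then show ?thesis
  proof cases
    case 1
    then show ?thesis
      using conclusion[OF split(3,4) split(1) disp0 A _ split(2) disp1 A1] by blast
  next
    case 2
    then show ?thesis
      using conclusion[OF split(3)[unfolded insert_commute[of "orbit (Suc n) f k x"]] split(4)[symmetric]
          split(2) disp1 A1 _ split(1) disp0 A] by blast
  qed
qed

theorem proposition3p3:
  fixes f :: "padic2 poly" and n :: nat and \<sigma> :: "int set"
  assumes "n \<ge> 2" and "is_cycle n f \<sigma>" and "weakly_splits n f \<sigma>"
  shows "\<exists>\<tau>1 \<tau>2. \<tau>1 \<noteq> \<tau>2 \<and> lifts n f \<sigma> = {\<tau>1, \<tau>2} \<and>
           weakly_splits (Suc n) f \<tau>1 \<and> weakly_grows (Suc n) f \<tau>2 \<and>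
           (\<exists>\<rho>. lifts (Suc n) f \<tau>2 = {\<rho>} \<and> strongly_splits (Suc (Suc n)) f \<rho>)"
proof -
  define x where "x = rep n \<sigma>"
  define k where "k = card \<sigma>"
  have "red n x \<in> \<sigma>"
    unfolding x_def by (rule rep_mem[OF assms(2)])
  note orbit = cycle_eq_orbit[OF assms(2) this, folded k_def]
  then obtain B where disp: "iterate f k x - x = 2^n * B"
    by (auto simp: exact_period_def red_eq_iff dvd_def)
  have "b_val n f \<sigma> = B"
    using disp by (intro b_val_eq) (simp add: x_def k_def)
  moreover have "a_val n f \<sigma> = iterate_deriv f k x"
    by (simp add: a_val_def x_def k_def)
  ultimately have "red 2 (iterate_deriv f k x) = 3" "red 1 B = 0"
    using assms(3) by (simp_all add: weakly_splits_def)
  then show ?thesis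
    using weakly_splitting_orbit_lifts[OF assms(1) orbit(1) disp] orbit(2) by simp
qed

end
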